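(* Let $F\subset A^*$ be a recurrent set and let $X\subset F$ be an $F$-thin set. The following conditions are equivalent: (i) $X$ is an $F$-maximal bifix code; (ii) $X$ is a prefix code which is left $F$-complete; (ii') $X$ is a suffix code which is right $F$-complete; (iii) $X$ is both an $F$-maximal prefix code and an $F$-maximal suffix code.
   Context: $A$ is a finite alphabet, $A^*$ the free monoid, $1$ the empty word, $A^+=A^*\setminus\{1\}$. A set $F\subset A^*$ is factorial if it is nonempty and contains all factors of its elements; it is recurrent if it is factorial and for all $u,w\in F$ there is $v\in F$ with $uvw\in F$. A prefix code is a set $X\subset A^+$ in which no element is a proper prefix of another; a suffix code is defined symmetrically; a bifix code is both. For $X\subset F$: $X$ is an $F$-maximal prefix (resp. suffix, bifix) code if it is a prefix (resp. suffix, bifix) code not properly contained in any prefix (resp. suffix, bifix) code $Y\subset F$. $X$ is $F$-thin if some word of $F$ is not a factor of any word of $X$. $X$ is right $F$-complete if every word of $F$ is a prefix of a word of $X^*$, and left $F$-complete if every word of $F$ is a suffix of a word of $X^*$. *)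

theory Defs
  imports Main "HOL-Library.Sublist"
begin

definition factor :: "'a list \<Rightarrow> 'a list \<Rightarrow> bool" where
  "factor u w \<longleftrightarrow> (\<exists>p s. w = p @ u @ s)"

definition factorial :: "'a set \<Rightarrow> 'a list set \<Rightarrow> bool" where
  "factorial A F \<longleftrightarrow> F \<subseteq> lists A \<and> F \<noteq> {} \<and>
     (\<forall>w\<in>F. \<forall>u. factor u w \<longrightarrow> u \<in> F)"

definition recurrent :: "'a set \<Rightarrow> 'a list set \<Rightarrow> bool" where
  "recurrent A F \<longleftrightarrow> factorial A F \<and>
     (\<forall>u\<in>F. \<forall>w\<in>F. \<exists>v\<in>F. u @ v @ w \<in> F)"

definition prefix_code :: "'a list set \<Rightarrow> bool" where
  "prefix_code X \<longleftrightarrow> [] \<notin> X \<and> (\<forall>x\<in>X. \<forall>y\<in>X. \<not> strict_prefix x y)"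

definition suffix_code :: "'a list set \<Rightarrow> bool" where
  "suffix_code X \<longleftrightarrow> [] \<notin> X \<and> (\<forall>x\<in>X. \<forall>y\<in>X. \<not> strict_suffix x y)"

definition bifix_code :: "'a list set \<Rightarrow> bool" where
  "bifix_code X \<longleftrightarrow> prefix_code X \<and> suffix_code X"

definition F_maximal_prefix_code :: "'a list set \<Rightarrow> 'a list set \<Rightarrow> bool" where
  "F_maximal_prefix_code F X \<longleftrightarrow> X \<subseteq> F \<and> prefix_code X \<and>
     (\<forall>Y. X \<subseteq> Y \<and> Y \<subseteq> F \<and> prefix_code Y \<longrightarrow> Y = X)"

definition F_maximal_suffix_code :: "'a list set \<Rightarrow> 'a list set \<Rightarrow> bool" where
  "F_maximal_suffix_code F X \<longleftrightarrow> X \<subseteq> F \<and> suffix_code X \<and>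
     (\<forall>Y. X \<subseteq> Y \<and> Y \<subseteq> F \<and> suffix_code Y \<longrightarrow> Y = X)"

definition F_maximal_bifix_code :: "'a list set \<Rightarrow> 'a list set \<Rightarrow> bool" where
  "F_maximal_bifix_code F X \<longleftrightarrow> X \<subseteq> F \<and> bifix_code X \<and>
     (\<forall>Y. X \<subseteq> Y \<and> Y \<subseteq> F \<and> bifix_code Y \<longrightarrow> Y = X)"

definition star :: "'a list set \<Rightarrow> 'a list set" where
  "star X = {concat xs | xs. set xs \<subseteq> X}"

definition F_thin :: "'a list set \<Rightarrow> 'a list set \<Rightarrow> bool" where
  "F_thin F X \<longleftrightarrow> (\<exists>w\<in>F. \<forall>x\<in>X. \<not> factor w x)"

definition right_F_complete :: "'a list set \<Rightarrow> 'a list set \<Rightarrow> bool" where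
  "right_F_complete F X \<longleftrightarrow> (\<forall>w\<in>F. \<exists>z\<in>star X. prefix w z)"

definition left_F_complete :: "'a list set \<Rightarrow> 'a list set \<Rightarrow> bool" where
  "left_F_complete F X \<longleftrightarrow> (\<forall>w\<in>F. \<exists>z\<in>star X. suffix w z)"

end

theory Submission
  imports Defs
begin

(* The heart of the proof is the implication "(ii) implies (ii')": if F is recurrent and X is an
   F-thin prefix code which is left F-complete, then X is a suffix code and right F-complete.
   Fix a word W of F that is not a factor of any word of X.  For a word g, the set states W g
   collects the proper prefixes q of words of X such that some nonempty suffix of W followed by g
   factors as a word of X^* followed by q.  Since X is a prefix code, each suffix of W yields at
   most one such q, so states W g is finite, and appending h to g maps states W g onto
   states W (g h) by a partial function.  Hence the cardinality can only drop along right
   extensions; choosing g with W g in F of minimal cardinality, all further transitions are total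
   and injective.  Totality yields right F-completeness, injectivity yields the suffix property.
   "(ii') implies (ii)" is the mirror image under word reversal.  Moreover a prefix code which is
   right F-complete is an F-maximal prefix code, and an F-maximal bifix code is left or right
   F-complete, since otherwise recurrence and thinness produce a word that can be added to X. *)

lemma factor_iff_sublist: "factor u w \<longleftrightarrow> sublist u w"
  by (simp add: factor_def sublist_def)

lemma concat_in_star: "set xs \<subseteq> X \<Longrightarrow> concat xs \<in> star X"
  by (auto simp: star_def)

lemma factorial_appendD:
  assumes "factorial A F" and "u @ v \<in> F"
  shows "u \<in> F" and "v \<in> F"
proof -
  have "factor u (u @ v)" "factor v (u @ v)"
    unfolding factor_iff_sublist by auto
  then show "u \<in> F" "v \<in> F" using assms unfolding factorial_def by blast+
qed

lemma recurrentD: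
  assumes "recurrent A F" and "u \<in> F" and "w \<in> F"
  obtains v where "u @ v @ w \<in> F"
  using assms unfolding recurrent_def by blast

section \<open>Word reversal exchanges prefixes and suffixes\<close>

text \<open>All notions of the theorem come in a prefix and a suffix version, which are exchanged by
  reversing all words; this halves the work.\<close>

lemma star_rev: "star (rev ` X) = rev ` star X"
proof
  show "star (rev ` X) \<subseteq> rev ` star X"
  proof
    fix z assume "z \<in> star (rev ` X)"
    then obtain xs where xs: "z = concat xs" "set xs \<subseteq> rev ` X" by (auto simp: star_def)
    have "rev z = concat (map rev (rev xs))" by (simp add: xs rev_concat)
    moreover have "set (map rev (rev xs)) \<subseteq> X" using xs(2) by auto
    ultimately have "rev z \<in> star X" by (metis concat_in_star)
    then show "z \<in> rev ` star X" by (metis image_eqI rev_rev_ident)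
  qed
next
  show "rev ` star X \<subseteq> star (rev ` X)"
  proof
    fix z assume "z \<in> rev ` star X"
    then obtain xs where xs: "z = rev (concat xs)" "set xs \<subseteq> X" by (auto simp: star_def)
    have "z = concat (map rev (rev xs))" by (simp add: xs rev_concat)
    moreover have "set (map rev (rev xs)) \<subseteq> rev ` X" using xs(2) by auto
    ultimately show "z \<in> star (rev ` X)" by (metis concat_in_star)
  qed
qed

lemma prefix_code_rev: "prefix_code (rev ` X) \<longleftrightarrow> suffix_code X"
  unfolding prefix_code_def suffix_code_def by (auto simp: strict_suffix_to_prefix)

lemma suffix_code_rev: "suffix_code (rev ` X) \<longleftrightarrow> prefix_code X"
  using prefix_code_rev[of "rev ` X"] by (simp add: image_image)

lemma left_complete_rev: "left_F_complete (rev ` F) (rev ` X) \<longleftrightarrow> right_F_complete F X"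
  unfolding left_F_complete_def right_F_complete_def star_rev by (auto simp: suffix_to_prefix)

lemma right_complete_rev: "right_F_complete (rev ` F) (rev ` X) \<longleftrightarrow> left_F_complete F X"
  using left_complete_rev[of "rev ` F" "rev ` X"] by (simp add: image_image)

lemma thin_rev: "F_thin (rev ` F) (rev ` X) \<longleftrightarrow> F_thin F X"
  unfolding F_thin_def factor_iff_sublist by (auto simp: sublist_rev_left)

lemma factorial_rev:
  assumes "factorial A F"
  shows "factorial A (rev ` F)"
  using assms unfolding factorial_def factor_iff_sublist
  by (auto simp: sublist_rev_right) (metis image_eqI rev_rev_ident)

lemma recurrent_rev:
  assumes "recurrent A F"
  shows "recurrent A (rev ` F)"
proof -
  have "factorial A F" using assms unfolding recurrent_def by blast
  then have "factorial A (rev ` F)" by (rule factorial_rev)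
  moreover have "\<exists>v\<in>rev ` F. u @ v @ w \<in> rev ` F" if uw_in: "u \<in> rev ` F" "w \<in> rev ` F" for u w
  proof -
    obtain u' w' where uw: "u = rev u'" "w = rev w'" "u' \<in> F" "w' \<in> F" using uw_in by blast
    obtain v where v: "v \<in> F" "w' @ v @ u' \<in> F"
      using assms uw(3,4) unfolding recurrent_def by blast
    have "u @ rev v @ w = rev (w' @ v @ u')" using uw(1,2) by simp
    then show ?thesis using v by blast
  qed
  ultimately show ?thesis unfolding recurrent_def by blast
qed

lemma maximal_suffix_code_of_rev:
  assumes max: "F_maximal_prefix_code (rev ` F) (rev ` X)"
  shows "F_maximal_suffix_code F X"
  unfolding F_maximal_suffix_code_def
proof (intro conjI allI impI)
  have "rev ` X \<subseteq> rev ` F" "prefix_code (rev ` X)"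
    using max unfolding F_maximal_prefix_code_def by blast+
  then show "X \<subseteq> F" "suffix_code X"
    by (simp_all add: inj_image_subset_iff prefix_code_rev)
  fix Y assume Y: "X \<subseteq> Y \<and> Y \<subseteq> F \<and> suffix_code Y"
  then have "rev ` X \<subseteq> rev ` Y" "rev ` Y \<subseteq> rev ` F" "prefix_code (rev ` Y)"
    by (simp_all add: image_mono prefix_code_rev)
  then have "rev ` Y = rev ` X" using max unfolding F_maximal_prefix_code_def by blast
  then show "Y = X" by (simp add: inj_image_eq_iff)
qed

section \<open>Prefix codes and factorizations\<close>

lemma prefix_code_Nil: "prefix_code X \<Longrightarrow> [] \<notin> X"
  unfolding prefix_code_def by auto

lemma prefix_code_prefix_eq:
  "prefix_code X \<Longrightarrow> x \<in> X \<Longrightarrow> y \<in> X \<Longrightarrow> prefix x y \<Longrightarrow> x = y"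
  unfolding prefix_code_def by (auto simp: strict_prefix_def)

lemma prefix_code_concat_prefix:
  assumes pc: "prefix_code X"
  shows "set xs \<subseteq> X \<Longrightarrow> set ys \<subseteq> X \<Longrightarrow> prefix (concat xs) (concat ys) \<Longrightarrow> \<exists>zs. ys = xs @ zs"
proof (induction xs arbitrary: ys)
  case Nil
  then show ?case by auto
next
  case (Cons x xs)
  have "x \<noteq> []" using Cons.prems prefix_code_Nil[OF pc] by auto
  then obtain y ys' where ys: "ys = y # ys'" using Cons.prems by (cases ys) auto
  have "prefix x (x @ concat xs)" by simp
  then have "prefix x (concat ys)" using Cons.prems(3) by (metis concat.simps(2) prefix_order.trans)
  moreover have "prefix y (concat ys)" using ys by simp
  ultimately have "prefix x y \<or> prefix y x" by (rule prefix_same_cases)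
  then have "x = y" using prefix_code_prefix_eq[OF pc, of x y] prefix_code_prefix_eq[OF pc, of y x]
      Cons.prems ys by auto
  then have "prefix (concat xs) (concat ys')" using Cons.prems(3) ys by simp
  then obtain zs where "ys' = xs @ zs" using Cons.IH[of ys'] Cons.prems(1,2) ys by auto
  then show ?case using ys \<open>x = y\<close> by auto
qed

lemma greedy_factorization:
  assumes "[] \<notin> X"
  shows "\<exists>ys r. set ys \<subseteq> X \<and> s = concat ys @ r \<and> (\<forall>x\<in>X. \<not> prefix x r)"
proof (induction s rule: length_induct)
  case (1 s)
  show ?case
  proof (cases "\<exists>x\<in>X. prefix x s")
    case True
    then obtain x s' where x: "x \<in> X" "s = x @ s'" by (auto simp: prefix_def)
    then have "length s' < length s" using assms by (cases x) auto
    then obtain ys r where "set ys \<subseteq> X \<and> s' = concat ys @ r \<and> (\<forall>x\<in>X. \<not> prefix x r)"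
      using 1 by blast
    then show ?thesis using x by (intro exI[of _ "x # ys"] exI[of _ r]) auto
  qed (intro exI[of _ "[]"] exI[of _ s]; auto)
qed

lemma suffix_of_concat:
  "suffix s (concat xs) \<Longrightarrow>
     \<exists>p ys. s = p @ concat ys \<and> set ys \<subseteq> set xs \<and> (p = [] \<or> (\<exists>x\<in>set xs. suffix p x))"
proof (induction xs)
  case Nil
  then show ?case by (intro exI[of _ "[]"]) auto
next
  case (Cons x xs)
  then have "suffix s (concat xs) \<or> (\<exists>p. s = p @ concat xs \<and> suffix p x)"
    by (simp add: suffix_append)
  then show ?case
  proof
    assume "suffix s (concat xs)"
    then show ?thesis using Cons.IH by force
  next
    assume "\<exists>p. s = p @ concat xs \<and> suffix p x"
    then show ?thesis by (metis list.set_intros(1) set_subset_Cons)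
  qed
qed

section \<open>Parsing words over a code\<close>

text \<open>This is the deterministic automaton of
  the prefix code X read from the left.\<close>

definition pending :: "'a list set \<Rightarrow> 'a list \<Rightarrow> bool" where
  "pending X q \<longleftrightarrow> (\<exists>x\<in>X. strict_prefix q x)"

definition parses :: "'a list set \<Rightarrow> 'a list \<Rightarrow> 'a list \<Rightarrow> bool" where
  "parses X u q \<longleftrightarrow> pending X q \<and> (\<exists>zs. set zs \<subseteq> X \<and> u = concat zs @ q)"

lemma pending_Nil: "x \<in> X \<Longrightarrow> x \<noteq> [] \<Longrightarrow> pending X []"
  unfolding pending_def by (auto simp: strict_prefix_def)

lemma parses_Nil: "pending X [] \<Longrightarrow> set zs \<subseteq> X \<Longrightarrow> parses X (concat zs) []"
  unfolding parses_def by auto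

lemma parses_unique_ordered:
  assumes pc: "prefix_code X" and xs: "set xs \<subseteq> X" and ys: "set ys \<subseteq> X"
    and q: "pending X q1" and eq: "concat xs @ q1 = concat ys @ q2"
    and len: "length (concat xs) \<le> length (concat ys)"
  shows "q1 = q2"
proof -
  have "prefix (concat xs) (concat ys)"
    using eq len by (metis prefix_length_prefix prefix_def)
  then obtain zs where zs: "ys = xs @ zs"
    using prefix_code_concat_prefix[OF pc xs ys] by blast
  then have q1: "q1 = concat zs @ q2" using eq by simp
  show ?thesis
  proof (cases zs)
    case (Cons z zs')
    obtain x where x: "x \<in> X" "strict_prefix q1 x" using q unfolding pending_def by blast
    have "z \<in> X" using zs Cons ys by auto
    moreover have "prefix z q1" using q1 Cons by simp
    then have "strict_prefix z x" using x(2) by (auto intro: prefix_order.le_less_trans)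
    ultimately show ?thesis using pc x(1) unfolding prefix_code_def by blast
  qed (use q1 in simp)
qed

lemma parses_unique:
  assumes "prefix_code X" and "parses X u q1" and "parses X u q2"
  shows "q1 = q2"
proof -
  obtain xs ys where "set xs \<subseteq> X" "set ys \<subseteq> X" "pending X q1" "pending X q2"
    "u = concat xs @ q1" "u = concat ys @ q2"
    using assms(2,3) unfolding parses_def by blast
  then show ?thesis
    using parses_unique_ordered[OF assms(1)] by (metis nle_le)
qed

lemma parses_split:
  assumes q': "pending X q'"
  shows "set xs \<subseteq> X \<Longrightarrow> u @ h = concat xs @ q' \<Longrightarrow> \<exists>q. parses X u q \<and> parses X (q @ h) q'"
proof (induction xs arbitrary: u)
  case Nil
  then have "prefix u q'" by (metis concat.simps(1) prefix_def append_Nil)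
  then have "pending X u" using q' unfolding pending_def by (auto intro: prefix_order.le_less_trans)
  then show ?case using Nil q' unfolding parses_def by (intro exI[of _ u]) (auto intro: exI[of _ "[]"])
next
  case (Cons x xs)
  show ?case
  proof (cases "length u < length x")
    case True
    have "prefix u (x @ concat xs @ q')" using Cons.prems by (metis concat.simps(2) append.assoc prefix_def)
    then have "prefix u x" using True prefix_length_prefix[of u _ x] by simp
    then have "strict_prefix u x" using True by (auto simp: strict_prefix_def)
    then have "parses X u u" using Cons.prems(1) unfolding parses_def pending_def
      by (intro conjI bexI[of _ x] exI[of _ "[]"]) auto
    moreover have "parses X (u @ h) q'" using Cons.prems q' unfolding parses_def
      by (intro conjI exI[of _ "x # xs"]) auto
    ultimately show ?thesis by blast
  next
    case False
    have "prefix x (u @ h)" using Cons.prems by simp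
    then have "prefix x u" using False by (metis prefix_length_prefix prefix_def linorder_not_less)
    then obtain u' where u': "u = x @ u'" by (auto simp: prefix_def)
    then obtain q where q: "parses X u' q" "parses X (q @ h) q'"
      using Cons by auto
    then obtain zs where "pending X q" "set zs \<subseteq> X" "u' = concat zs @ q" unfolding parses_def by blast
    then have "parses X u q" using u' Cons.prems(1) unfolding parses_def
      by (intro conjI exI[of _ "x # zs"]) auto
    then show ?thesis using q(2) by blast
  qed
qed

lemma parses_append: "parses X (u @ h) q' \<longleftrightarrow> (\<exists>q. parses X u q \<and> parses X (q @ h) q')"
proof
  assume "parses X (u @ h) q'"
  then show "\<exists>q. parses X u q \<and> parses X (q @ h) q'"
    using parses_split unfolding parses_def by blast
next
  assume "\<exists>q. parses X u q \<and> parses X (q @ h) q'"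
  then obtain q ys zs where "pending X q'" "set ys \<subseteq> X" "u = concat ys @ q" "set zs \<subseteq> X"
    "q @ h = concat zs @ q'" unfolding parses_def by blast
  then show "parses X (u @ h) q'" unfolding parses_def by (intro conjI exI[of _ "ys @ zs"]) auto
qed

section \<open>The states reachable from a word W\<close>

definition states :: "'a list set \<Rightarrow> 'a list \<Rightarrow> 'a list \<Rightarrow> 'a list set" where
  "states X W g = {q. \<exists>j<length W. parses X (drop j W @ g) q}"

lemma finite_states:
  assumes "prefix_code X"
  shows "finite (states X W g)"
proof -
  have "states X W g \<subseteq> (\<lambda>j. THE q. parses X (drop j W @ g) q) ` {..<length W}"
  proof
    fix q assume "q \<in> states X W g"
    then obtain j where j: "j < length W" "parses X (drop j W @ g) q" unfolding states_def by blast
    then have "q = (THE q. parses X (drop j W @ g) q)"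
      using parses_unique[OF assms] by (intro the_equality[symmetric]) blast+
    then show "q \<in> (\<lambda>j. THE q. parses X (drop j W @ g) q) ` {..<length W}" using j(1) by blast
  qed
  then show ?thesis by (rule finite_subset) simp
qed

text \<open>The empty state is reached after W g whenever W g is in F: by left completeness W g is a
  suffix of a product of codewords, and the cut inside W exists since W is no factor of a
  codeword.\<close>

lemma Nil_in_states:
  assumes lc: "left_F_complete F X" and W: "\<forall>x\<in>X. \<not> factor W x" "W \<noteq> []"
    and pend: "pending X []" and Wg: "W @ g \<in> F"
  shows "[] \<in> states X W g"
proof -
  obtain xs where xs: "set xs \<subseteq> X" "suffix (W @ g) (concat xs)"
    using lc Wg unfolding left_F_complete_def star_def by blast
  obtain p ys where py: "W @ g = p @ concat ys" "set ys \<subseteq> set xs" "p = [] \<or> (\<exists>x\<in>set xs. suffix p x)"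
    using suffix_of_concat[OF xs(2)] by blast
  have short: "length p < length W"
  proof (rule ccontr)
    assume "\<not> length p < length W"
    then have "prefix W p" using py(1) by (metis prefix_length_prefix prefix_def linorder_not_less)
    then obtain t where t: "p = W @ t" by (auto simp: prefix_def)
    then obtain x where "x \<in> set xs" "suffix p x" using py(3) W(2) by auto
    then obtain s where "x = s @ W @ t" using t by (auto simp: suffix_def)
    then have "factor W x" unfolding factor_def by blast
    then show False using W(1) xs(1) \<open>x \<in> set xs\<close> by auto
  qed
  have "drop (length p) W @ g = drop (length p) (W @ g)" using short by simp
  also have "\<dots> = concat ys" using py(1) by simp
  finally have "drop (length p) W @ g = concat ys" .
  then show ?thesis unfolding states_def using short parses_Nil[OF pend] py(2) xs(1) by fastforce
qed

lemma states_append: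
  "states X W (g @ h) = {q'. \<exists>q\<in>states X W g. parses X (q @ h) q'}"
  unfolding states_def using parses_append[where u = "drop _ W @ g"] by auto

lemma functional_relation_card:
  assumes fin: "finite S" and func: "\<And>a b b'. R a b \<Longrightarrow> R a b' \<Longrightarrow> b = b'"
  shows "card {b. \<exists>a\<in>S. R a b} \<le> card S"
    and "card S \<le> card {b. \<exists>a\<in>S. R a b} \<Longrightarrow>
           (\<forall>a\<in>S. \<exists>b. R a b) \<and> (\<forall>a\<in>S. \<forall>a'\<in>S. \<forall>b. R a b \<longrightarrow> R a' b \<longrightarrow> a = a')"
proof -
  define D where "D = {a\<in>S. \<exists>b. R a b}"
  define f where "f a = (THE b. R a b)" for a
  have fR: "R a b \<longleftrightarrow> a \<in> D \<and> f a = b" if "a \<in> S" for a b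
  proof
    assume "R a b"
    then show "a \<in> D \<and> f a = b" using that func unfolding D_def f_def by auto
  next
    assume "a \<in> D \<and> f a = b"
    then obtain b' where "R a b'" "f a = b" unfolding D_def by blast
    then show "R a b" using the_equality[of "R a" b'] func unfolding f_def by auto
  qed
  have img: "{b. \<exists>a\<in>S. R a b} = f ` D"
    using fR D_def by auto
  have DS: "D \<subseteq> S" "finite D" using fin D_def by auto
  have le: "card (f ` D) \<le> card D" "card D \<le> card S"
    using card_image_le[OF DS(2)] card_mono[OF fin DS(1)] .
  then show "card {b. \<exists>a\<in>S. R a b} \<le> card S" unfolding img by linarith
  assume "card S \<le> card {b. \<exists>a\<in>S. R a b}"
  then have "card D = card S" "card (f ` D) = card D" using le unfolding img by linarith+
  then have "D = S" "inj_on f D"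
    using card_subset_eq[OF fin DS(1)] eq_card_imp_inj_on[OF DS(2)] by auto
  then show "(\<forall>a\<in>S. \<exists>b. R a b) \<and> (\<forall>a\<in>S. \<forall>a'\<in>S. \<forall>b. R a b \<longrightarrow> R a' b \<longrightarrow> a = a')"
    using fR D_def by (auto dest: inj_onD)
qed

lemma states_card_mono:
  assumes "prefix_code X"
  shows "card (states X W (g @ h)) \<le> card (states X W g)"
  unfolding states_append
  by (rule functional_relation_card(1)[OF finite_states[OF assms]]) (use parses_unique[OF assms] in blast)

lemma stable_transitions:
  assumes pc: "prefix_code X" and stable: "card (states X W g) \<le> card (states X W (g @ h))"
  shows "\<forall>q\<in>states X W g. \<exists>q'. parses X (q @ h) q'"
    and "\<forall>q1\<in>states X W g. \<forall>q2\<in>states X W g. \<forall>q'.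
           parses X (q1 @ h) q' \<longrightarrow> parses X (q2 @ h) q' \<longrightarrow> q1 = q2"
  using functional_relation_card(2)[OF finite_states[OF pc], of "\<lambda>q q'. parses X (q @ h) q'"]
    parses_unique[OF pc] stable unfolding states_append by blast+

text \<open>Totality of the transition from the empty state: s is a prefix of a product of
  codewords.\<close>

lemma stable_right_extension:
  assumes pc: "prefix_code X" and init: "[] \<in> states X W g"
    and stable: "card (states X W g) \<le> card (states X W (g @ s))"
  shows "\<exists>z\<in>star X. prefix s z"
proof -
  obtain q' where "parses X s q'" using stable_transitions(1)[OF pc stable] init by fastforce
  then obtain zs x where "set zs \<subseteq> X" "s = concat zs @ q'" "x \<in> X" "strict_prefix q' x"
    unfolding parses_def pending_def by blast
  then have "prefix s (concat (zs @ [x]))" by (auto simp: strict_prefix_def prefix_def)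
  moreover have "concat (zs @ [x]) \<in> star X" using \<open>set zs \<subseteq> X\<close> \<open>x \<in> X\<close> by (intro concat_in_star) auto
  ultimately show ?thesis by blast
qed

text \<open>Injectivity of the transition by a codeword x: if u x is a codeword too, then u parses
  to the empty state, so u is a product of codewords, which the prefix property forbids unless u
  is empty.\<close>

lemma stable_left_factor_Nil:
  assumes pc: "prefix_code X"
    and init: "[] \<in> states X W g" "[] \<in> states X W (g @ u)"
    and stable: "card (states X W g) \<le> card (states X W (g @ u))"
      "card (states X W (g @ u)) \<le> card (states X W ((g @ u) @ x))"
    and x: "x \<in> X" and ux: "u @ x \<in> X"
  shows "u = []"
proof -
  have "x \<noteq> []" using x prefix_code_Nil[OF pc] by auto
  then have pend: "pending X []" using x pending_Nil by blast
  obtain q1 where q1: "parses X u q1" using stable_transitions(1)[OF pc stable(1)] init(1) by fastforce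
  have q1_state: "q1 \<in> states X W (g @ u)" unfolding states_append using init(1) q1 by force
  obtain q2 where q2: "parses X (q1 @ x) q2" using stable_transitions(1)[OF pc stable(2)] q1_state by blast
  have "parses X (u @ x) q2" using parses_append q1 q2 by blast
  moreover have "parses X (u @ x) []" using parses_Nil[OF pend, of "[u @ x]"] ux by simp
  ultimately have "q2 = []" using parses_unique[OF pc] by blast
  moreover have "parses X ([] @ x) []" using parses_Nil[OF pend, of "[x]"] x by simp
  ultimately have "q1 = []" using stable_transitions(2)[OF pc stable(2)] q1_state init(2) q2 by blast
  then obtain zs where zs: "set zs \<subseteq> X" "u = concat zs" using q1 unfolding parses_def by auto
  show "u = []"
  proof (cases zs)
    case (Cons z zs')
    then have "z \<in> X" "strict_prefix z (u @ x)" using zs \<open>x \<noteq> []\<close> by (auto simp: strict_prefix_def)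
    then show ?thesis using pc ux unfolding prefix_code_def by blast
  qed (use zs in simp)
qed

section \<open>The central implication and its mirror image\<close>

text \<open>(ii) implies (ii'): take W witnessing thinness and g0 with W g0 in F minimizing the number
  of states; by recurrence every word s of F (and every codeword) can be placed after some
  extension W g0 v inside F, where the transitions are stable.\<close>

lemma prefix_left_complete_imp_suffix_right_complete:
  assumes rec: "recurrent A F" and XF: "X \<subseteq> F" and thin: "F_thin F X"
    and pc: "prefix_code X" and lc: "left_F_complete F X"
  shows "suffix_code X \<and> right_F_complete F X"
proof (cases "\<exists>x. x \<in> X")
  case False
  then have "F \<subseteq> {[]}" using lc unfolding left_F_complete_def star_def by auto
  moreover have "[] \<in> star X" using concat_in_star[of "[]" X] by simp
  ultimately show ?thesis using False unfolding suffix_code_def right_F_complete_def by auto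
next
  case True
  have fac: "factorial A F" using rec unfolding recurrent_def by blast
  obtain W where W: "W \<in> F" "\<forall>x\<in>X. \<not> factor W x" using thin unfolding F_thin_def by blast
  have "factor [] x" for x :: "'a list" unfolding factor_def by (metis append_Nil)
  then have "W \<noteq> []" using True W(2) by blast
  moreover have pend: "pending X []" using True pending_Nil prefix_code_Nil[OF pc] by metis
  ultimately have init: "[] \<in> states X W g" if "W @ g \<in> F" for g
    using Nil_in_states[OF lc W(2)] that by blast
  \<comment> \<open>the number of states is minimal after W g0, hence it is constant along extensions in F\<close>
  obtain g0 where g0: "W @ g0 \<in> F" "\<And>g. W @ g \<in> F \<Longrightarrow> card (states X W g0) \<le> card (states X W g)"
    using ex_has_least_nat[of "\<lambda>g. W @ g \<in> F" "[]" "\<lambda>g. card (states X W g)"] W(1) by auto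
  have stable: "card (states X W (g0 @ k)) \<le> card (states X W ((g0 @ k) @ h))"
    if "W @ g0 @ k @ h \<in> F" for k h
    using g0(2)[of "(g0 @ k) @ h"] states_card_mono[OF pc, of W g0 k] that by force
  have "right_F_complete F X"
    unfolding right_F_complete_def
  proof
    fix s assume "s \<in> F"
    then obtain v where v: "W @ g0 @ v @ s \<in> F" using recurrentD[OF rec g0(1)] by auto
    then have "W @ g0 @ v \<in> F" using factorial_appendD[OF fac, of "W @ g0 @ v" s] by simp
    then show "\<exists>z\<in>star X. prefix s z"
      using stable_right_extension[OF pc init stable[OF v]] by simp
  qed
  moreover have "\<not> strict_suffix x y" if xy: "x \<in> X" "y \<in> X" for x y
  proof
    assume "strict_suffix x y"
    then obtain u where u: "y = u @ x" "u \<noteq> []" by (auto simp: strict_suffix_def suffix_def)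
    obtain v where "(W @ g0) @ v @ y \<in> F" using recurrentD[OF rec g0(1)] xy(2) XF by blast
    then have v: "W @ g0 @ (v @ u) @ x \<in> F" using u(1) by simp
    have Wu: "W @ g0 @ v @ u \<in> F" using factorial_appendD(1)[OF fac, of "W @ g0 @ v @ u" x] v by simp
    have Wv: "W @ g0 @ v \<in> F" using factorial_appendD(1)[OF fac, of "W @ g0 @ v" u] Wu by simp
    have "u = []"
    proof (rule stable_left_factor_Nil[OF pc _ _ _ _ xy(1)])
      show "[] \<in> states X W (g0 @ v)" using init Wv by simp
      show "[] \<in> states X W ((g0 @ v) @ u)" using init[of "(g0 @ v) @ u"] Wu by simp
      show "card (states X W (g0 @ v)) \<le> card (states X W ((g0 @ v) @ u))" using stable[of v u] Wu by simp
      show "card (states X W ((g0 @ v) @ u)) \<le> card (states X W (((g0 @ v) @ u) @ x))"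
        using stable[of "v @ u" x] v by simp
      show "u @ x \<in> X" using xy(2) u(1) by simp
    qed
    then show False using u(2) by simp
  qed
  ultimately show ?thesis using prefix_code_Nil[OF pc] unfolding suffix_code_def by blast
qed

lemma suffix_right_complete_imp_prefix_left_complete:
  assumes "recurrent A F" and "X \<subseteq> F" and "F_thin F X" and "suffix_code X"
    and "right_F_complete F X"
  shows "prefix_code X \<and> left_F_complete F X"
  using prefix_left_complete_imp_suffix_right_complete[OF recurrent_rev[OF assms(1)], of "rev ` X"] assms
  by (simp add: image_mono thin_rev prefix_code_rev suffix_code_rev left_complete_rev right_complete_rev)

section \<open>Completeness and maximality\<close>

text \<open>A right F-complete prefix code cannot be enlarged inside F: a new word would be comparable
  with the first codeword of a product it is a prefix of.\<close>

lemma right_complete_imp_maximal_prefix: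
  assumes XF: "X \<subseteq> F" and pc: "prefix_code X" and rc: "right_F_complete F X"
  shows "F_maximal_prefix_code F X"
  unfolding F_maximal_prefix_code_def
proof (intro conjI allI impI XF pc)
  fix Y assume Y: "X \<subseteq> Y \<and> Y \<subseteq> F \<and> prefix_code Y"
  have "y \<in> X" if "y \<in> Y" for y
  proof -
    have "y \<in> F" "y \<noteq> []" using Y that prefix_code_Nil by auto
    then obtain zs where zs: "set zs \<subseteq> X" "prefix y (concat zs)"
      using rc unfolding right_F_complete_def star_def by blast
    then obtain x zs' where "zs = x # zs'" using \<open>y \<noteq> []\<close> by (cases zs) auto
    then have x: "x \<in> X" "prefix x (concat zs)" using zs by auto
    then have "prefix x y \<or> prefix y x" using prefix_same_cases zs(2) by blast
    then have "x = y"
      using prefix_code_prefix_eq[of Y x y] prefix_code_prefix_eq[of Y y x] Y x(1) \<open>y \<in> Y\<close> by auto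
    then show "y \<in> X" using x(1) by simp
  qed
  then show "Y = X" using Y by auto
qed

lemma left_complete_imp_maximal_suffix:
  assumes "X \<subseteq> F" and "suffix_code X" and "left_F_complete F X"
  shows "F_maximal_suffix_code F X"
  using assms right_complete_imp_maximal_prefix[of "rev ` X" "rev ` F"]
  by (intro maximal_suffix_code_of_rev) (simp add: image_mono prefix_code_rev right_complete_rev)

text \<open>If X is not right F-complete, some nonempty word r of F can never be extended to the right
  into a word with a prefix in X: take the tail left over by greedily parsing a word of F which
  is not a prefix of a product of codewords.\<close>

lemma not_right_complete_witness:
  assumes fac: "factorial A F" and nil: "[] \<notin> X" and nrc: "\<not> right_F_complete F X"
  shows "\<exists>r\<in>F. r \<noteq> [] \<and> (\<forall>t. \<forall>x\<in>X. \<not> prefix x (r @ t))"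
proof -
  obtain s where s: "s \<in> F" "\<forall>z\<in>star X. \<not> prefix s z"
    using nrc unfolding right_F_complete_def by blast
  obtain ys r where g: "set ys \<subseteq> X" "s = concat ys @ r" "\<forall>x\<in>X. \<not> prefix x r"
    using greedy_factorization[OF nil] by blast
  have "r \<noteq> []"
  proof
    assume "r = []"
    then have "s \<in> star X" using g concat_in_star by simp
    then show False using s(2) by blast
  qed
  moreover have "r \<in> F" using factorial_appendD(2)[OF fac, of "concat ys" r] s(1) g(2) by simp
  moreover have "\<not> prefix x (r @ t)" if "x \<in> X" for t x
  proof
    assume "prefix x (r @ t)"
    then have "prefix x r \<or> prefix r x" using prefix_same_cases[of x "r @ t" r] by simp
    then have "prefix r x" using g(3) that by blast
    then have "prefix s (concat (ys @ [x]))" using g(2) by (auto simp: prefix_def)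
    then show False using s(2) concat_in_star[of "ys @ [x]" X] g(1) that by auto
  qed
  ultimately show ?thesis by blast
qed

lemma not_left_complete_witness:
  assumes fac: "factorial A F" and nil: "[] \<notin> X" and nlc: "\<not> left_F_complete F X"
  shows "\<exists>l\<in>F. l \<noteq> [] \<and> (\<forall>t. \<forall>x\<in>X. \<not> suffix x (t @ l))"
proof -
  obtain r where r: "r \<in> rev ` F" "r \<noteq> []" "\<forall>t. \<forall>x\<in>rev ` X. \<not> prefix x (r @ t)"
    using not_right_complete_witness[OF factorial_rev[OF fac], of "rev ` X"] nil nlc
    by (auto simp: right_complete_rev)
  have "\<not> suffix x (t @ rev r)" if "x \<in> X" for t x
    using r(3) that by (simp add: suffix_to_prefix)
  then show ?thesis using r(1,2) by (intro bexI[of _ "rev r"]) auto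
qed

lemma bifix_code_insert:
  assumes "bifix_code X" and "z \<noteq> []"
    and "\<forall>x\<in>X. \<not> prefix x z \<and> \<not> prefix z x \<and> \<not> suffix x z \<and> \<not> suffix z x"
  shows "bifix_code (insert z X)"
  using assms unfolding bifix_code_def prefix_code_def suffix_code_def
  by (auto simp: strict_prefix_def strict_suffix_def)

text \<open>An F-maximal bifix code is complete on at least one side: otherwise the word r v W v' l,
  with r and l the witnesses above and W witnessing thinness, could be added to X.\<close>

lemma maximal_bifix_imp_one_sided_complete:
  assumes rec: "recurrent A F" and thin: "F_thin F X" and mb: "F_maximal_bifix_code F X"
  shows "right_F_complete F X \<or> left_F_complete F X"
proof (rule ccontr)
  assume incomplete: "\<not> (right_F_complete F X \<or> left_F_complete F X)"
  have fac: "factorial A F" using rec unfolding recurrent_def by blast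
  have bc: "bifix_code X" and XF: "X \<subseteq> F" using mb unfolding F_maximal_bifix_code_def by blast+
  then have nil: "[] \<notin> X" unfolding bifix_code_def prefix_code_def by blast
  obtain W where W: "W \<in> F" "\<forall>x\<in>X. \<not> factor W x" using thin unfolding F_thin_def by blast
  obtain r where r: "r \<in> F" "r \<noteq> []" "\<forall>t. \<forall>x\<in>X. \<not> prefix x (r @ t)"
    using not_right_complete_witness[OF fac nil] incomplete by blast
  obtain l where l: "l \<in> F" "\<forall>t. \<forall>x\<in>X. \<not> suffix x (t @ l)"
    using not_left_complete_witness[OF fac nil] incomplete by blast
  obtain v where "r @ v @ W \<in> F" using recurrentD[OF rec r(1) W(1)] .
  then obtain v' where "(r @ v @ W) @ v' @ l \<in> F" using recurrentD[OF rec _ l(1)] by blast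
  define z where "z = r @ v @ W @ v' @ l"
  have zF: "z \<in> F" using \<open>(r @ v @ W) @ v' @ l \<in> F\<close> unfolding z_def by simp
  have unrelated: "\<not> prefix x z \<and> \<not> prefix z x \<and> \<not> suffix x z \<and> \<not> suffix z x" if "x \<in> X" for x
  proof -
    have "\<not> factor z x"
    proof
      assume "factor z x"
      then obtain p s where "x = (p @ r @ v) @ W @ (v' @ l @ s)" unfolding factor_def z_def by auto
      then show False using W(2) that unfolding factor_def by blast
    qed
    then have "\<not> prefix z x \<and> \<not> suffix z x"
      unfolding factor_iff_sublist by auto
    moreover have "\<not> suffix x ((r @ v @ W @ v') @ l)" using l(2) that by blast
    ultimately show ?thesis using r(3) that unfolding z_def by simp
  qed
  have "bifix_code (insert z X)" using bifix_code_insert[OF bc] r(2) unrelated unfolding z_def by simp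
  then have "insert z X = X" using mb XF zF unfolding F_maximal_bifix_code_def by blast
  moreover have "factor W z" unfolding z_def factor_def
    by (rule exI[of _ "r @ v"], rule exI[of _ "v' @ l"]) simp
  then have "z \<notin> X" using W(2) by blast
  ultimately show False by blast
qed

theorem mainTheorem1:
  fixes A :: "'a set" and F X :: "'a list set"
  assumes "finite A"
    and "recurrent A F"
    and "X \<subseteq> F"
    and "F_thin F X"
  shows "(F_maximal_bifix_code F X \<longleftrightarrow> prefix_code X \<and> left_F_complete F X)
       \<and> (F_maximal_bifix_code F X \<longleftrightarrow> suffix_code X \<and> right_F_complete F X)
       \<and> (F_maximal_bifix_code F X \<longleftrightarrow> F_maximal_prefix_code F X \<and> F_maximal_suffix_code F X)"
proof -
  note rec = assms(2) and XF = assms(3) and thin = assms(4)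
  have ii_iff_ii': "prefix_code X \<and> left_F_complete F X \<longleftrightarrow> suffix_code X \<and> right_F_complete F X"
    using prefix_left_complete_imp_suffix_right_complete[OF rec XF thin]
      suffix_right_complete_imp_prefix_left_complete[OF rec XF thin] by blast
  have i_ii: "prefix_code X \<and> left_F_complete F X" if "F_maximal_bifix_code F X"
    using that maximal_bifix_imp_one_sided_complete[OF rec thin] ii_iff_ii'
    unfolding F_maximal_bifix_code_def bifix_code_def by blast
  have ii_iii: "F_maximal_prefix_code F X \<and> F_maximal_suffix_code F X"
    if "prefix_code X \<and> left_F_complete F X"
    using that ii_iff_ii' right_complete_imp_maximal_prefix[OF XF] left_complete_imp_maximal_suffix[OF XF]
    by blast
  have iii_i: "F_maximal_bifix_code F X" if "F_maximal_prefix_code F X \<and> F_maximal_suffix_code F X"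
    using that unfolding F_maximal_bifix_code_def F_maximal_prefix_code_def F_maximal_suffix_code_def
      bifix_code_def by blast
  show ?thesis using ii_iff_ii' i_ii ii_iii iii_i by blast
qed

end
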